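(* Let $Z_h$ be a $(\beta,M)$-scale free hashing-based estimator with $\beta\in[\tfrac12,1]$ and $M\ge 1$. Let $x$ be a query with $\mu=\mu(x)>0$, let $\tau\in[\mu,1]$ and $\gamma\in[0,1]$, and suppose $x$ is $(\tau,\gamma)$-localized. Then $$\mathbb{E}[Z_h^2]\le \mu^2\cdot M^3\left\{2\tau^{\beta}+\gamma^{2-\beta}+\tau^{2\beta-1}\gamma^{\beta}\right\}\mu^{-\beta}.$$
   Context: Let $P=\{x_1,\dots,x_n\}\subset\mathbb{R}^d$ be a dataset and $x\in\mathbb{R}^d$ a query. Each data point has a nonnegative weight $w_i=w_i(x)$ (e.g. $w_i(x)=k(x,x_i)$ for a kernel $k$), and $\mu=\mu(x)=\frac1n\sum_{i=1}^n w_i(x)$. Given a family $\mathcal{H}$ of hash functions on $\mathbb{R}^d$ with a probability distribution $\nu$, sample $h\sim\nu$ and let $H(x)=\{i\in[n]:h(x_i)=h(x)\}$; let $I(x)$ be a uniformly random element of $H(x)$, or $\perp$ if $H(x)$ is empty; let $p_i=p_i(x)=\Pr_{h\sim\nu}[i\in H(x)]$, with the conventions $p_\perp=1$, $w_\perp=0$. The hashing-based estimator (HBE) is $Z_h=Z_h(x)=\frac{w_{I(x)}}{p_{I(x)}}\cdot\frac{|H(x)|}{n}$. The HBE is $(\beta,M)$-scale free (for $\beta\in(0,1]$, $M\ge1$) if $M^{-1}w_i(x)^\beta\le p_i(x)\le M\,w_i(x)^\beta$ for all $i\in[n]$ and all queries $x$. For $\tau\in[\mu,1]$ let $B_{\tau,\mu}(x)=\{i\in[n]: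 w_i\ge \mu/\tau\}$; for $\gamma\in[0,1]$ the query $x$ is $(\tau,\gamma)$-localized if $\sum_{i\in B_{\tau,\mu}(x)}w_i\ge(1-\gamma)\sum_{i=1}^n w_i$. *)

theory Defs
  imports "HOL-Probability.Probability"
begin

text \<open>Data set P = (P 0, ..., P (n-1)) with points in real^'d; index set [n] = {..<n}.
  Weights w q i = w_i(q) for query q. Hash family: a pmf nu over hash functions.\<close>

definition mu_w :: "('q \<Rightarrow> nat \<Rightarrow> real) \<Rightarrow> nat \<Rightarrow> 'q \<Rightarrow> real" where
  "mu_w w n q = (\<Sum>i<n. w q i) / real n"

definition coll_prob :: "('a \<Rightarrow> 'b) pmf \<Rightarrow> (nat \<Rightarrow> 'a) \<Rightarrow> 'a \<Rightarrow> nat \<Rightarrow> real" where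
  "coll_prob \<nu> P q i = measure_pmf.prob \<nu> {h. h (P i) = h q}"

definition hash_bucket :: "('a \<Rightarrow> 'b) \<Rightarrow> (nat \<Rightarrow> 'a) \<Rightarrow> nat \<Rightarrow> 'a \<Rightarrow> nat set" where
  "hash_bucket h P n q = {i \<in> {..<n}. h (P i) = h q}"

text \<open>Distribution of the HBE Z_h(q): sample h from nu, then I(q) uniformly from H(q);
  if H(q) is empty then I = \<bottom> and Z = w_\<bottom>/p_\<bottom> * 0 = 0.\<close>
definition hbe :: "('a \<Rightarrow> 'b) pmf \<Rightarrow> (nat \<Rightarrow> 'a) \<Rightarrow> ('a \<Rightarrow> nat \<Rightarrow> real) \<Rightarrow> nat \<Rightarrow> 'a \<Rightarrow> real pmf" where
  "hbe \<nu> P w n q = do {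
     h \<leftarrow> \<nu>;
     let H = hash_bucket h P n q;
     if H = {} then return_pmf 0
     else map_pmf (\<lambda>i. w q i / coll_prob \<nu> P q i * (real (card H) / real n)) (pmf_of_set H)
   }"

definition scale_free :: "('a \<Rightarrow> 'b) pmf \<Rightarrow> (nat \<Rightarrow> 'a) \<Rightarrow> ('a \<Rightarrow> nat \<Rightarrow> real) \<Rightarrow> nat \<Rightarrow> real \<Rightarrow> real \<Rightarrow> bool" where
  "scale_free \<nu> P w n \<beta> M \<longleftrightarrow>
     (\<forall>q. \<forall>i<n. (1 / M) * w q i powr \<beta> \<le> coll_prob \<nu> P q i \<and> coll_prob \<nu> P q i \<le> M * w q i powr \<beta>)"

definition localized :: "('q \<Rightarrow> nat \<Rightarrow> real) \<Rightarrow> nat \<Rightarrow> 'q \<Rightarrow> real \<Rightarrow> real \<Rightarrow> bool" where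
  "localized w n q \<tau> \<gamma> \<longleftrightarrow>
     (\<Sum>i\<in>{i \<in> {..<n}. w q i \<ge> mu_w w n q / \<tau>}. w q i) \<ge> (1 - \<gamma>) * (\<Sum>i<n. w q i)"

end

theory Submission
  imports Defs
begin

(*
  Averaging over the bucket first, E[Z_h^2] = n^-2 * sum_{i,j} (w_i/p_i)^2 * Pr[h(x_i) = h(x_j) = h(x)],
  which is at most n^-2 * sum_{i,j} (w_i/p_i)^2 * min p_i p_j; by scale-freeness each term is at most
  M^3 * w_i^(2-2 beta) * min(w_i, w_j)^beta.  Split the indices into the heavy set B = {i. w_i >= mu/tau}
  and the light rest L, whose total weight is at most gamma * n * mu by localization.  On the columns
  j in B, w_j^(1-beta) <= (mu/tau)^(-beta) * w_j gives the tau^beta term; on B x L,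
  w_i^(2-2beta) <= (mu/tau)^(1-2beta) * w_i (here beta >= 1/2 is used) together with the power-mean
  bound sum_L w_j^beta <= |L|^(1-beta) * (sum_L w_j)^beta gives the tau^(2beta-1) * gamma^beta term;
  on L x L the power-mean bound alone gives the gamma^(2-beta) term.
*)

lemma expectation_bind_pmf_nonneg:
  fixes f :: "'b \<Rightarrow> real" and M :: "'a pmf" and N :: "'a \<Rightarrow> 'b pmf"
  assumes f_nonneg: "\<And>y. 0 \<le> f y"
    and inner: "\<And>x. integrable (measure_pmf (N x)) f"
    and outer: "integrable (measure_pmf M) (\<lambda>x. measure_pmf.expectation (N x) f)"
  shows "measure_pmf.expectation (bind_pmf M N) f
    = measure_pmf.expectation M (\<lambda>x. measure_pmf.expectation (N x) f)"
proof -
  have inner_nn: "(\<integral>\<^sup>+y. f y \<partial>N x) = ennreal (measure_pmf.expectation (N x) f)" for x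
    by (rule nn_integral_eq_integral[OF inner]) (simp add: f_nonneg)
  have "measure_pmf.expectation (bind_pmf M N) f = enn2real (\<integral>\<^sup>+y. f y \<partial>bind_pmf M N)"
    by (rule integral_eq_nn_integral) (simp_all add: f_nonneg)
  also have "\<dots> = enn2real (\<integral>\<^sup>+x. ennreal (measure_pmf.expectation (N x) f) \<partial>M)"
    by (simp add: inner_nn)
  also have "\<dots> = measure_pmf.expectation M (\<lambda>x. measure_pmf.expectation (N x) f)"
    by (subst nn_integral_eq_integral[OF outer])
      (simp_all add: f_nonneg integral_nonneg_AE)
  finally show ?thesis .
qed

lemma expectation_square_scaled_pmf_of_set:
  fixes c :: "nat \<Rightarrow> real"
  assumes H: "H \<subseteq> {..<n}"
  shows "measure_pmf.expectation
      (if H = {} then return_pmf 0 else map_pmf (\<lambda>i. c i * (real (card H) / real n)) (pmf_of_set H))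
      (\<lambda>z. z^2)
    = (\<Sum>i<n. \<Sum>j<n. c i ^ 2 * of_bool (i \<in> H \<and> j \<in> H)) / (real n)^2"
proof -
  have fin: "finite H" using H finite_subset by blast
  have "(\<Sum>i<n. \<Sum>j<n. c i ^ 2 * of_bool (i \<in> H \<and> j \<in> H))
      = (\<Sum>i<n. c i ^ 2 * of_bool (i \<in> H) * real (card H))"
    using H by (simp add: of_bool_conj mult.assoc sum_distrib_left[symmetric] sum_of_bool_eq Int_absorb1
        Int_def[symmetric])
  also have "\<dots> = (\<Sum>i\<in>H. c i ^ 2) * real (card H)"
    using H by (simp add: sum_distrib_right[symmetric] sum.inter_restrict[symmetric] Int_absorb1
        flip: of_bool_def)
  finally have double_sum: "(\<Sum>i<n. \<Sum>j<n. c i ^ 2 * of_bool (i \<in> H \<and> j \<in> H))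
      = (\<Sum>i\<in>H. c i ^ 2) * real (card H)" .
  show ?thesis
  proof (cases "H = {}")
    case False
    have "measure_pmf.expectation (map_pmf (\<lambda>i. c i * (real (card H) / real n)) (pmf_of_set H)) (\<lambda>z. z^2)
        = (\<Sum>i\<in>H. (c i * (real (card H) / real n))^2) / real (card H)"
      using False fin by (simp add: integral_pmf_of_set)
    also have "\<dots> = (\<Sum>i\<in>H. c i ^ 2) * (real (card H) / real n)^2 / real (card H)"
      unfolding sum_distrib_right power_mult_distrib[symmetric] by simp
    also have "\<dots> = (\<Sum>i\<in>H. c i ^ 2) * real (card H) / (real n)^2"
      using False fin by (simp add: power2_eq_square)
    finally show ?thesis unfolding double_sum using False by simp
  qed (simp add: double_sum)
qed

lemma hbe_second_moment:
  fixes \<nu> :: "('a \<Rightarrow> 'b) pmf" and P :: "nat \<Rightarrow> 'a" and w :: "'a \<Rightarrow> nat \<Rightarrow> real"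
  shows "measure_pmf.expectation (hbe \<nu> P w n x) (\<lambda>z. z^2)
    = (\<Sum>i<n. \<Sum>j<n. (w x i / coll_prob \<nu> P x i)^2
         * measure_pmf.prob \<nu> {h. h (P i) = h x \<and> h (P j) = h x}) / (real n)^2"
proof -
  define c where "c i = w x i / coll_prob \<nu> P x i" for i
  define C :: "nat \<Rightarrow> nat \<Rightarrow> ('a \<Rightarrow> 'b) set"
    where "C i j = {h. h (P i) = h x \<and> h (P j) = h x}" for i j
  define Z :: "('a \<Rightarrow> 'b) \<Rightarrow> real pmf" where "Z = (\<lambda>h. let H = hash_bucket h P n x in
      if H = {} then return_pmf 0 else map_pmf (\<lambda>i. c i * (real (card H) / real n)) (pmf_of_set H))"
  have Z_square: "measure_pmf.expectation (Z h) (\<lambda>z. z^2)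
      = (\<Sum>i<n. \<Sum>j<n. c i ^ 2 * indicator (C i j) h) / (real n)^2" for h
  proof -
    let ?H = "hash_bucket h P n x"
    have "(\<Sum>i<n. \<Sum>j<n. c i ^ 2 * indicator (C i j) h)
        = (\<Sum>i<n. \<Sum>j<n. c i ^ 2 * of_bool (i \<in> ?H \<and> j \<in> ?H))"
      by (intro sum.cong refl) (simp add: C_def hash_bucket_def)
    moreover have "?H \<subseteq> {..<n}" by (auto simp: hash_bucket_def)
    ultimately show ?thesis
      unfolding Z_def Let_def by (simp add: expectation_square_scaled_pmf_of_set)
  qed
  have Z_integrable: "integrable (measure_pmf (Z h)) (\<lambda>z. z^2)" for h
    by (rule integrable_measure_pmf_finite) (simp add: Z_def Let_def hash_bucket_def)
  have hbe_eq: "hbe \<nu> P w n x = \<nu> \<bind> Z"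
    unfolding hbe_def Z_def c_def ..
  have indicator_integrable: "integrable (measure_pmf \<nu>) (indicator (C i j) :: _ \<Rightarrow> real)" for i j
    by (rule integrable_real_indicator) (simp_all add: measure_pmf.emeasure_finite less_top[symmetric])
  have outer_integrable: "integrable (measure_pmf \<nu>) (\<lambda>h. measure_pmf.expectation (Z h) (\<lambda>z. z^2))"
    unfolding Z_square
    by (intro integrable_divide Bochner_Integration.integrable_sum integrable_mult_right indicator_integrable)
  have "measure_pmf.expectation (hbe \<nu> P w n x) (\<lambda>z. z^2)
      = measure_pmf.expectation \<nu> (\<lambda>h. measure_pmf.expectation (Z h) (\<lambda>z. z^2))"
    unfolding hbe_eq by (rule expectation_bind_pmf_nonneg[OF _ Z_integrable outer_integrable]) simp
  also have "\<dots> = measure_pmf.expectation \<nu> (\<lambda>h. (\<Sum>i<n. \<Sum>j<n. c i ^ 2 * indicator (C i j) h) / (real n)^2)"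
    unfolding Z_square ..
  also have "\<dots> = (\<Sum>i<n. \<Sum>j<n. c i ^ 2 * measure_pmf.expectation \<nu> (indicator (C i j))) / (real n)^2"
    by (simp only: integral_divide_zero Bochner_Integration.integral_sum integral_mult_right_zero
        integrable_mult_right Bochner_Integration.integrable_sum indicator_integrable)
  also have "\<dots> = (\<Sum>i<n. \<Sum>j<n. c i ^ 2 * measure_pmf.prob \<nu> (C i j)) / (real n)^2"
    by simp
  finally show ?thesis by (simp add: c_def C_def)
qed

lemma hbe_second_moment_le:
  fixes \<nu> :: "('a \<Rightarrow> 'b) pmf" and P :: "nat \<Rightarrow> 'a" and w :: "'a \<Rightarrow> nat \<Rightarrow> real"
  shows "measure_pmf.expectation (hbe \<nu> P w n x) (\<lambda>z. z^2)
    \<le> (\<Sum>i<n. \<Sum>j<n. (w x i / coll_prob \<nu> P x i)^2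
         * min (coll_prob \<nu> P x i) (coll_prob \<nu> P x j)) / (real n)^2"
  unfolding hbe_second_moment coll_prob_def
  by (intro divide_right_mono sum_mono mult_left_mono min.boundedI measure_pmf.finite_measure_mono) auto

lemma sum_powr_le_card_powr_sum:
  fixes a :: "'i \<Rightarrow> real"
  assumes A: "finite A" and a: "\<And>j. j \<in> A \<Longrightarrow> 0 \<le> a j" and q: "0 \<le> q" "q \<le> 1"
  shows "(\<Sum>j\<in>A. a j powr q) \<le> real (card A) powr (1 - q) * (\<Sum>j\<in>A. a j) powr q"
proof (cases "(\<Sum>j\<in>A. a j) = 0")
  case True
  then have "\<forall>j\<in>A. a j = 0" using sum_nonneg_eq_0_iff[OF A] a by blast
  then show ?thesis by simp
next
  case False
  define N where "N = real (card A)"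
  define m where "m = (\<Sum>j\<in>A. a j) / N"
  have S_pos: "0 < (\<Sum>j\<in>A. a j)" using False a by (metis order_le_less sum_nonneg)
  have N_pos: "0 < N" using False A by (auto simp: N_def card_gt_0_iff)
  have m_pos: "0 < m" unfolding m_def using S_pos N_pos by simp
  \<comment> \<open>Young's inequality: \<open>t powr q\<close> lies below its tangent \<open>q t + (1 - q)\<close> at \<open>t = 1\<close>,
    applied to \<open>t = a j / m\<close> with \<open>m\<close> the mean.\<close>
  have tangent: "a j powr q \<le> m powr q * (q * (a j / m) + (1 - q))" if "j \<in> A" for j
  proof (cases "a j = 0")
    case True
    then show ?thesis using q m_pos by simp
  next
    case False
    then have aj: "0 < a j" using a[OF that] by linarith
    have "(a j / m) powr q * 1 powr (1 - q) \<le> q * (a j / m) + (1 - q) * 1"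
      by (rule Youngs_inequality_0) (use q aj m_pos in auto)
    moreover have "a j powr q = m powr q * (a j / m) powr q"
      using aj m_pos by (simp add: powr_divide)
    ultimately show ?thesis using m_pos by (simp add: mult_left_mono)
  qed
  have "(\<Sum>j\<in>A. a j powr q) \<le> (\<Sum>j\<in>A. m powr q * (q * (a j / m) + (1 - q)))"
    by (rule sum_mono) (rule tangent)
  also have "\<dots> = m powr q * (q * ((\<Sum>j\<in>A. a j) / m) + (1 - q) * N)"
    unfolding N_def
    by (simp add: sum_distrib_left sum.distrib sum_divide_distrib[symmetric] ring_distribs)
  also have "\<dots> = m powr q * N"
    using m_pos N_pos unfolding m_def by (simp add: field_simps)
  also have "\<dots> = N powr (1 - q) * (\<Sum>j\<in>A. a j) powr q"
    using S_pos N_pos unfolding m_def by (simp add: powr_divide powr_diff field_simps)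
  finally show ?thesis unfolding N_def .
qed

lemma powr_le_powr_mult_of_ge:
  fixes \<theta> t r :: real
  assumes "0 < \<theta>" "\<theta> \<le> t" "r \<le> 1"
  shows "t powr r \<le> \<theta> powr (r - 1) * t"
proof -
  have "t powr r = t powr (r - 1) * t"
    using assms powr_add[of t "r - 1" 1] by simp
  also have "\<dots> \<le> \<theta> powr (r - 1) * t"
    by (intro mult_right_mono powr_mono2') (use assms in auto)
  finally show ?thesis .
qed

lemma sum_powr_le_powr_mult_sum_of_ge:
  fixes w :: "'i \<Rightarrow> real"
  assumes "0 < \<theta>" "\<And>j. j \<in> B \<Longrightarrow> \<theta> \<le> w j" "r \<le> 1"
  shows "(\<Sum>j\<in>B. w j powr r) \<le> \<theta> powr (r - 1) * sum w B"
  unfolding sum_distrib_left by (intro sum_mono powr_le_powr_mult_of_ge) (use assms in auto)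

definition collision_weight :: "real \<Rightarrow> real \<Rightarrow> real \<Rightarrow> real" where
  "collision_weight \<beta> a b = a powr (2 - 2*\<beta>) * min a b powr \<beta>"

lemma collision_weight_le_mult_powr:
  fixes a b \<beta> :: real
  assumes a: "0 \<le> a" and b: "0 \<le> b" and beta: "1/2 \<le> \<beta>" "\<beta> \<le> 1"
  shows "collision_weight \<beta> a b \<le> a * b powr (1 - \<beta>)"
  unfolding collision_weight_def
proof (cases "a \<le> b")
  case True
  have "a powr (2 - 2*\<beta>) * min a b powr \<beta> = a * a powr (1 - \<beta>)"
    using True a powr_add[of a "2 - 2*\<beta>" \<beta>] powr_add[of a 1 "1 - \<beta>"] by simp
  also have "\<dots> \<le> a * b powr (1 - \<beta>)"
    by (intro mult_left_mono powr_mono2) (use True a beta in auto)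
  finally show "a powr (2 - 2*\<beta>) * min a b powr \<beta> \<le> a * b powr (1 - \<beta>)" .
next
  case False
  have "a powr (2 - 2*\<beta>) * min a b powr \<beta> = a powr (2 - 2*\<beta>) * b powr (2*\<beta> - 1) * b powr (1 - \<beta>)"
    using False powr_add[of b "2*\<beta> - 1" "1 - \<beta>"] by simp
  also have "\<dots> \<le> a powr (2 - 2*\<beta>) * a powr (2*\<beta> - 1) * b powr (1 - \<beta>)"
    by (intro mult_left_mono mult_right_mono powr_mono2) (use False b beta in auto)
  also have "\<dots> = a * b powr (1 - \<beta>)"
    using a powr_add[of a "2 - 2*\<beta>" "2*\<beta> - 1"] by simp
  finally show "a powr (2 - 2*\<beta>) * min a b powr \<beta> \<le> a * b powr (1 - \<beta>)" .
qed

lemma collision_weight_le_powr_mult_powr: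
  fixes a b \<beta> :: real
  assumes "0 \<le> a" "0 \<le> b" "0 \<le> \<beta>"
  shows "collision_weight \<beta> a b \<le> a powr (2 - 2*\<beta>) * b powr \<beta>"
  unfolding collision_weight_def using assms by (intro mult_left_mono powr_mono2) auto

lemma scale_free_term_le:
  fixes a b p q \<beta> M :: real
  assumes a: "0 \<le> a" and b: "0 \<le> b" and beta: "0 \<le> \<beta>" and M: "0 < M"
    and p: "(1/M) * a powr \<beta> \<le> p" "p \<le> M * a powr \<beta>"
    and q: "(1/M) * b powr \<beta> \<le> q" "q \<le> M * b powr \<beta>"
  shows "(a / p)^2 * min p q \<le> M^3 * collision_weight \<beta> a b"
proof (cases "a = 0")
  case True
  then show ?thesis using M by (simp add: collision_weight_def)
next
  case False
  then have a_pos: "0 < a" using a by simp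
  have "0 < (1/M) * a powr \<beta>" using a_pos M by simp
  then have p_pos: "0 < p" using p(1) by linarith
  have "a / p \<le> a / ((1/M) * a powr \<beta>)"
    by (rule divide_left_mono) (use p p_pos a_pos M in auto)
  also have "\<dots> = M * a powr (1 - \<beta>)"
    using a_pos M by (simp add: powr_diff field_simps)
  finally have "(a / p)^2 \<le> (M * a powr (1 - \<beta>))^2"
    by (rule power_mono) (use a p_pos in simp)
  also have "\<dots> = M^2 * a powr (2 - 2*\<beta>)"
    by (simp add: power_mult_distrib power2_eq_square powr_add[symmetric])
  finally have ratio: "(a / p)^2 \<le> M^2 * a powr (2 - 2*\<beta>)" .
  have "min p q \<le> M * min (a powr \<beta>) (b powr \<beta>)"
    using p q M by (auto simp: min_def)
  also have "min (a powr \<beta>) (b powr \<beta>) = min a b powr \<beta>"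
    using powr_mono2[OF beta a, of b] powr_mono2[OF beta b, of a] by (auto simp: min_def)
  finally have min_le: "min p q \<le> M * min a b powr \<beta>" .
  have "0 \<le> (1/M) * b powr \<beta>" using M by simp
  then have "0 \<le> q" using q(1) by linarith
  then have "(a / p)^2 * min p q \<le> M^2 * a powr (2 - 2*\<beta>) * (M * min a b powr \<beta>)"
    using p_pos by (intro mult_mono ratio min_le) auto
  then show ?thesis by (simp add: collision_weight_def power2_eq_square power3_eq_cube mult_ac)
qed

lemma sum_collision_weight_heavy_le:
  fixes w :: "'i \<Rightarrow> real"
  assumes I: "\<And>i. i \<in> I \<Longrightarrow> 0 \<le> w i" and \<theta>: "0 < \<theta>" and B: "\<And>j. j \<in> B \<Longrightarrow> \<theta> \<le> w j"
    and beta: "1/2 \<le> \<beta>" "\<beta> \<le> 1"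
  shows "(\<Sum>i\<in>I. \<Sum>j\<in>B. collision_weight \<beta> (w i) (w j)) \<le> sum w I * (\<theta> powr (- \<beta>) * sum w B)"
proof -
  have "(\<Sum>i\<in>I. \<Sum>j\<in>B. collision_weight \<beta> (w i) (w j)) \<le> (\<Sum>i\<in>I. \<Sum>j\<in>B. w i * w j powr (1 - \<beta>))"
    by (intro sum_mono collision_weight_le_mult_powr)
      (use I B \<theta> beta in \<open>auto intro: order_trans[OF less_imp_le[OF \<theta>]]\<close>)
  also have "\<dots> = sum w I * (\<Sum>j\<in>B. w j powr (1 - \<beta>))"
    by (simp add: sum_product)
  also have "\<dots> \<le> sum w I * (\<theta> powr (- \<beta>) * sum w B)"
    using sum_powr_le_powr_mult_sum_of_ge[of \<theta> B w "1 - \<beta>"] I B \<theta> beta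
    by (intro mult_left_mono) (auto intro: sum_nonneg)
  finally show ?thesis .
qed

lemma sum_collision_weight_heavy_light_le:
  fixes w :: "'i \<Rightarrow> real"
  assumes L: "finite L" "\<And>j. j \<in> L \<Longrightarrow> 0 \<le> w j" and \<theta>: "0 < \<theta>" and B: "\<And>i. i \<in> B \<Longrightarrow> \<theta> \<le> w i"
    and beta: "1/2 \<le> \<beta>" "\<beta> \<le> 1"
  shows "(\<Sum>i\<in>B. \<Sum>j\<in>L. collision_weight \<beta> (w i) (w j))
    \<le> \<theta> powr (1 - 2*\<beta>) * sum w B * (real (card L) powr (1 - \<beta>) * sum w L powr \<beta>)"
proof -
  have "0 \<le> sum w B" using B \<theta> by (intro sum_nonneg) (meson less_le_trans less_imp_le)
  have "(\<Sum>i\<in>B. \<Sum>j\<in>L. collision_weight \<beta> (w i) (w j))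
      \<le> (\<Sum>i\<in>B. \<Sum>j\<in>L. w i powr (2 - 2*\<beta>) * w j powr \<beta>)"
    by (intro sum_mono collision_weight_le_powr_mult_powr)
      (use L B \<theta> beta in \<open>auto intro: order_trans[OF less_imp_le[OF \<theta>]]\<close>)
  also have "\<dots> = (\<Sum>i\<in>B. w i powr (2 - 2*\<beta>)) * (\<Sum>j\<in>L. w j powr \<beta>)"
    by (simp add: sum_product)
  also have "\<dots> \<le> \<theta> powr (1 - 2*\<beta>) * sum w B * (real (card L) powr (1 - \<beta>) * sum w L powr \<beta>)"
    using sum_powr_le_powr_mult_sum_of_ge[of \<theta> B w "2 - 2*\<beta>"] sum_powr_le_card_powr_sum[of L w \<beta>]
      L B \<theta> beta \<open>0 \<le> sum w B\<close>
    by (intro mult_mono) (auto intro: sum_nonneg)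
  finally show ?thesis .
qed

lemma sum_collision_weight_le_card_powr:
  fixes w :: "'i \<Rightarrow> real"
  assumes L: "finite L" "\<And>j. j \<in> L \<Longrightarrow> 0 \<le> w j" and beta: "1/2 \<le> \<beta>" "\<beta> \<le> 1"
  shows "(\<Sum>i\<in>L. \<Sum>j\<in>L. collision_weight \<beta> (w i) (w j)) \<le> real (card L) powr \<beta> * sum w L powr (2 - \<beta>)"
proof -
  have G: "0 \<le> sum w L" using L by (auto intro: sum_nonneg)
  have "(\<Sum>i\<in>L. \<Sum>j\<in>L. collision_weight \<beta> (w i) (w j)) \<le> (\<Sum>i\<in>L. \<Sum>j\<in>L. w i * w j powr (1 - \<beta>))"
    by (intro sum_mono collision_weight_le_mult_powr) (use L beta in auto)
  also have "\<dots> = sum w L * (\<Sum>j\<in>L. w j powr (1 - \<beta>))"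
    by (simp add: sum_product)
  also have "\<dots> \<le> sum w L * (real (card L) powr \<beta> * sum w L powr (1 - \<beta>))"
    using sum_powr_le_card_powr_sum[of L w "1 - \<beta>"] L G beta by (intro mult_left_mono) auto
  also have "\<dots> = real (card L) powr \<beta> * sum w L powr (2 - \<beta>)"
    using G powr_add[of "sum w L" 1 "1 - \<beta>"] by simp
  finally show ?thesis .
qed

lemma localized_sum_collision_weight_le:
  fixes w :: "'q \<Rightarrow> nat \<Rightarrow> real"
  assumes w_nonneg: "\<And>i. i < n \<Longrightarrow> 0 \<le> w x i"
    and beta: "1/2 \<le> \<beta>" "\<beta> \<le> 1"
    and mu_pos: "0 < mu_w w n x" and tau_pos: "0 < \<tau>"
    and loc: "localized w n x \<tau> \<gamma>"
  shows "(\<Sum>i<n. \<Sum>j<n. collision_weight \<beta> (w x i) (w x j))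
    \<le> (real n)^2 * mu_w w n x powr (2 - \<beta>)
       * (\<tau> powr \<beta> + \<gamma> powr (2 - \<beta>) + \<tau> powr (2*\<beta> - 1) * \<gamma> powr \<beta>)"
proof -
  define \<mu> where "\<mu> = mu_w w n x"
  define \<theta> where "\<theta> = \<mu> / \<tau>"
  define B where "B = {i \<in> {..<n}. \<theta> \<le> w x i}"
  define L where "L = {..<n} - B"
  define S where "S = (\<Sum>i<n. w x i)"
  define G where "G = (\<Sum>j\<in>L. w x j)"
  have n_pos: "0 < n" using mu_pos by (cases n) (auto simp: mu_w_def)
  have S_eq: "S = real n * \<mu>" using n_pos by (simp add: S_def \<mu>_def mu_w_def)
  have S_pos: "0 < S" using S_eq n_pos mu_pos by (simp add: \<mu>_def)
  have \<theta>_pos: "0 < \<theta>" using mu_pos tau_pos by (simp add: \<theta>_def \<mu>_def)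
  have heavy: "\<theta> \<le> w x j" if "j \<in> B" for j using that by (simp add: B_def)
  have L: "finite L" "L \<subseteq> {..<n}" "\<And>j. j \<in> L \<Longrightarrow> 0 \<le> w x j" using w_nonneg by (auto simp: L_def)
  have split: "sum f {..<n} = sum f B + sum f L" for f :: "nat \<Rightarrow> real"
    using sum.subset_diff[of B "{..<n}"] by (simp add: L_def add.commute B_def subset_eq)
  have G_nonneg: "0 \<le> G" unfolding G_def using L by (auto intro: sum_nonneg)
  have B_le: "sum (w x) B \<le> S" using split[of "w x"] G_nonneg unfolding S_def G_def by simp
  have G_le: "G \<le> \<gamma> * S"
    using loc split[of "w x"] by (simp add: localized_def S_def G_def B_def \<theta>_def \<mu>_def algebra_simps)
  have gamma_nonneg: "0 \<le> \<gamma>" using G_nonneg G_le S_pos mult_neg_pos[of \<gamma> S] by linarith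
  have light_le: "real (card L) powr r * G powr s \<le> real n powr r * (\<gamma> * S) powr s"
    if "0 \<le> r" "0 \<le> s" for r s
    using card_mono[OF _ L(2)] G_nonneg G_le that by (intro mult_mono powr_mono2) auto
  have heavy_cols: "(\<Sum>i<n. \<Sum>j\<in>B. collision_weight \<beta> (w x i) (w x j)) \<le> S * (\<theta> powr (- \<beta>) * S)"
    by (rule order_trans[OF sum_collision_weight_heavy_le])
      (use w_nonneg \<theta>_pos heavy beta B_le S_pos in \<open>auto simp flip: S_def intro: mult_left_mono\<close>)
  have heavy_light: "(\<Sum>i\<in>B. \<Sum>j\<in>L. collision_weight \<beta> (w x i) (w x j))
      \<le> \<theta> powr (1 - 2*\<beta>) * S * (real n powr (1 - \<beta>) * (\<gamma> * S) powr \<beta>)"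
    by (rule order_trans[OF sum_collision_weight_heavy_light_le mult_mono[OF mult_left_mono[OF B_le]]])
      (use L \<theta>_pos heavy light_le[of "1 - \<beta>" \<beta>] S_pos beta in \<open>auto simp: G_def\<close>)
  have light: "(\<Sum>i\<in>L. \<Sum>j\<in>L. collision_weight \<beta> (w x i) (w x j))
      \<le> real n powr \<beta> * (\<gamma> * S) powr (2 - \<beta>)"
    by (rule order_trans[OF sum_collision_weight_le_card_powr])
      (use L light_le[of \<beta> "2 - \<beta>"] beta in \<open>auto simp: G_def\<close>)
  have "(\<Sum>i<n. \<Sum>j<n. collision_weight \<beta> (w x i) (w x j))
      = (\<Sum>i<n. \<Sum>j\<in>B. collision_weight \<beta> (w x i) (w x j))
      + (\<Sum>i\<in>B. \<Sum>j\<in>L. collision_weight \<beta> (w x i) (w x j))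
      + (\<Sum>i\<in>L. \<Sum>j\<in>L. collision_weight \<beta> (w x i) (w x j))"
    by (simp only: split sum.distrib add_ac)
  also have "\<dots> \<le> S * (\<theta> powr (- \<beta>) * S)
      + \<theta> powr (1 - 2*\<beta>) * S * (real n powr (1 - \<beta>) * (\<gamma> * S) powr \<beta>)
      + real n powr \<beta> * (\<gamma> * S) powr (2 - \<beta>)"
    using heavy_cols heavy_light light by (intro add_mono)
  also have "\<dots> = (real n)^2 * \<mu> powr (2 - \<beta>)
       * (\<tau> powr \<beta> + \<gamma> powr (2 - \<beta>) + \<tau> powr (2*\<beta> - 1) * \<gamma> powr \<beta>)"
    using n_pos mu_pos tau_pos gamma_nonneg powr_add[of \<mu> \<beta> \<beta>] unfolding S_eq \<theta>_def \<mu>_def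
    by (simp add: powr_minus powr_divide powr_diff powr_mult powr_realpow power2_eq_square field_simps)
  finally show ?thesis unfolding \<mu>_def .
qed

theorem theorem5:
  fixes \<nu> :: "(real ^ 'd \<Rightarrow> 'b) pmf" and P :: "nat \<Rightarrow> real ^ 'd"
    and w :: "real ^ 'd \<Rightarrow> nat \<Rightarrow> real" and n :: nat
    and x :: "real ^ 'd" and \<beta> M \<tau> \<gamma> :: real
  assumes w_nonneg: "\<And>q i. i < n \<Longrightarrow> 0 \<le> w q i"
    and sf: "scale_free \<nu> P w n \<beta> M"
    and beta: "1/2 \<le> \<beta>" "\<beta> \<le> 1"
    and M: "1 \<le> M"
    and mu_pos: "mu_w w n x > 0"
    and tau: "mu_w w n x \<le> \<tau>" "\<tau> \<le> 1"
    and gamma: "0 \<le> \<gamma>" "\<gamma> \<le> 1"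
    and loc: "localized w n x \<tau> \<gamma>"
  shows "measure_pmf.expectation (hbe \<nu> P w n x) (\<lambda>z. z ^ 2)
    \<le> (mu_w w n x) ^ 2 * M ^ 3
       * (2 * \<tau> powr \<beta> + \<gamma> powr (2 - \<beta>) + \<tau> powr (2 * \<beta> - 1) * \<gamma> powr \<beta>)
       * (mu_w w n x) powr (- \<beta>)"
proof -
  let ?\<mu> = "mu_w w n x" and ?p = "coll_prob \<nu> P x"
  have n_pos: "0 < n" using mu_pos by (cases n) (auto simp: mu_w_def)
  have tau_pos: "0 < \<tau>" using mu_pos tau(1) by linarith
  have "measure_pmf.expectation (hbe \<nu> P w n x) (\<lambda>z. z ^ 2)
      \<le> (\<Sum>i<n. \<Sum>j<n. (w x i / ?p i)^2 * min (?p i) (?p j)) / (real n)^2"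
    by (rule hbe_second_moment_le)
  also have "\<dots> \<le> M^3 * (\<Sum>i<n. \<Sum>j<n. collision_weight \<beta> (w x i) (w x j)) / (real n)^2"
    unfolding sum_distrib_left using sf beta M w_nonneg
    by (intro divide_right_mono sum_mono scale_free_term_le) (auto simp: scale_free_def)
  also have "\<dots> \<le> M^3 * (?\<mu> powr (2 - \<beta>)
      * (\<tau> powr \<beta> + \<gamma> powr (2 - \<beta>) + \<tau> powr (2*\<beta> - 1) * \<gamma> powr \<beta>))"
    unfolding times_divide_eq_right[symmetric] using M n_pos
      localized_sum_collision_weight_le[OF w_nonneg beta mu_pos tau_pos loc]
    by (intro mult_left_mono) (simp_all add: pos_divide_le_eq mult_ac)
  \<comment> \<open>one of the two \<open>\<tau> powr \<beta>\<close> terms is slack\<close>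
  also have "\<dots> \<le> ?\<mu> ^ 2 * M ^ 3
       * (2 * \<tau> powr \<beta> + \<gamma> powr (2 - \<beta>) + \<tau> powr (2 * \<beta> - 1) * \<gamma> powr \<beta>)
       * ?\<mu> powr (- \<beta>)"
    using mu_pos M by (simp add: powr_minus powr_diff powr_realpow field_simps)
  finally show ?thesis .
qed

end
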